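(* Let $\alpha\ge 0$, let $\mathbf{G}\subset\mathbb{R}^2$ be a ground-truth box (a closed oriented rectangle of positive area not containing the origin) and let $\mathbf{P}\subset\mathbb{R}^2$ be a prediction box (a closed oriented rectangle of positive area). Then $\mathsf{EC\text{-}IoU}(\mathbf{P},\mathbf{G}) = 1$ if and only if $\mathbf{P} = \mathbf{G}$.
   Context: $\rho(x,y)=\sqrt{x^2+y^2}$ is the distance to the origin (the ego position). For a ground-truth box $\mathbf{G}$ with center $(x_{\mathbf{G}},y_{\mathbf{G}})$, define the weight $\omega_{\mathbf{G}}(x,y) = \left[\rho(x_{\mathbf{G}},y_{\mathbf{G}})/\rho(x,y)\right]^{\alpha}$ for $(x,y)\in\mathbf{G}$. For a region $\mathbf{D}\subseteq\mathbf{G}$ let $\mathsf{Weighted\text{-}Area}_{\mathbf{G}}(\mathbf{D}) = \iint_{\mathbf{D}} \omega_{\mathbf{G}}(x,y)\,dA$, and for any region $\mathbf{D}$ let $\mathsf{Area}(\mathbf{D}) = \iint_{\mathbf{D}} 1\,dA$. The Ego-Centric IoU is $$\mathsf{EC\text{-}IoU}(\mathbf{P},\mathbf{G}) = \frac{\mathsf{Weighted\text{-}Area}_{\mathbf{G}}(\mathbf{P}\cap\mathbf{G})}{\mathsf{Weighted\text{-}Area}_{\mathbf{G}}(\mathbf{G}) + \mathsf{Area}(\mathbf{P}) - \mathsf{Area}(\mathbf{P}\cap\mathbf{G})}.$$ *)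

theory Defs
  imports "HOL-Analysis.Analysis"
begin

text \<open>An oriented box with center c, width w,
length l and heading angle th is the closed rectangle obtained by rotating
[-w/2, w/2] x [-l/2, l/2] by th and translating by c.\<close>

definition obox :: "real \<times> real \<Rightarrow> real \<Rightarrow> real \<Rightarrow> real \<Rightarrow> (real \<times> real) set" where
  "obox c w l th = {(fst c + cos th * s - sin th * t, snd c + sin th * s + cos th * t) | s t.
      \<bar>s\<bar> \<le> w / 2 \<and> \<bar>t\<bar> \<le> l / 2}"

definition rho :: "real \<times> real \<Rightarrow> real" where
  "rho p = sqrt ((fst p)\<^sup>2 + (snd p)\<^sup>2)"

definition ec_weight :: "real \<Rightarrow> real \<times> real \<Rightarrow> real \<times> real \<Rightarrow> real" where
  "ec_weight \<alpha> cG p = (rho cG / rho p) powr \<alpha>"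

definition weighted_area :: "real \<Rightarrow> real \<times> real \<Rightarrow> (real \<times> real) set \<Rightarrow> real" where
  "weighted_area \<alpha> cG D = integral D (ec_weight \<alpha> cG)"

definition area :: "(real \<times> real) set \<Rightarrow> real" where
  "area D = integral D (\<lambda>_. 1)"

definition ec_iou :: "real \<Rightarrow> (real \<times> real) set \<Rightarrow> real \<times> real \<Rightarrow> (real \<times> real) set \<Rightarrow> real" where
  "ec_iou \<alpha> P cG G =
     weighted_area \<alpha> cG (P \<inter> G) / (weighted_area \<alpha> cG G + area P - area (P \<inter> G))"

end

theory Submission
  imports Defs
begin

text \<open>Both boxes are compact convex sets with nonempty interior, and the weight is continuous
and positive on the ground-truth box because that box avoids the ego position. As
\<open>P \<inter> G \<subseteq> G\<close> and \<open>P \<inter> G \<subseteq> P\<close>, the numerator is at most \<open>Weighted-Area(G)\<close> and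
\<open>Area(P) - Area(P \<inter> G) \<ge> 0\<close>, so the ratio is 1 only if both inequalities are equalities.
But a compact proper subset of a convex body misses a small open box inside the body, on which
a positive continuous integrand has positive integral; hence \<open>P \<inter> G = G\<close> and \<open>P \<inter> G = P\<close>.\<close>

lemma integrable_continuous_compact:
  fixes f :: "'a::euclidean_space \<Rightarrow> 'b::euclidean_space"
  assumes "compact S" "continuous_on S f"
  shows "f integrable_on S"
proof -
  have "(\<lambda>x. indicator S x *\<^sub>R f x) integrable_on UNIV"
    using borel_integrable_compact[OF assms] by (rule integrable_on_lborel)
  then show ?thesis
    by (simp add: indicator_scaleR_eq_if integrable_restrict_UNIV)
qed

lemma integral_less_integral_superset:
  fixes f :: "'a::euclidean_space \<Rightarrow> real"
  assumes S: "compact S" "continuous_on S f" "\<And>x. x \<in> S \<Longrightarrow> 0 \<le> f x"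
    and D: "compact D" "D \<subseteq> S"
    and U: "open U" "U \<subseteq> S - D" "y \<in> U" "0 < f y"
  shows "integral D f < integral S f"
proof -
  have "continuous_on U f"
    using S(2) U(2) continuous_on_subset by blast
  then have "open (U \<inter> f -` {f y / 2<..})"
    using U(1) by (intro continuous_open_preimage) auto
  moreover have "y \<in> U \<inter> f -` {f y / 2<..}"
    using U(3,4) by auto
  ultimately obtain a b where C: "cbox a b \<subseteq> U \<inter> f -` {f y / 2<..}"
    and ab: "\<forall>i\<in>Basis. a \<bullet> i < b \<bullet> i"
    by (rule open_contains_cbox)
  have CS: "cbox a b \<subseteq> S" and CD: "cbox a b \<inter> D = {}"
    using C U(2) by auto
  have int_C: "f integrable_on cbox a b"
    using S(2) CS continuous_on_subset by (blast intro: integrable_continuous)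
  have int_D: "f integrable_on D"
    using D S(2) continuous_on_subset by (blast intro: integrable_continuous_compact)
  have "0 < f y / 2 * Henstock_Kurzweil_Integration.content (cbox a b)"
    using U(4) ab by (simp add: content_pos_lt_eq)
  also have "\<dots> = integral (cbox a b) (\<lambda>_. f y / 2)"
    by simp
  also have "\<dots> \<le> integral (cbox a b) f"
    using C int_C by (intro integral_le) auto
  finally have "integral D f < integral D f + integral (cbox a b) f"
    by simp
  also have "\<dots> = integral (D \<union> cbox a b) f"
    using int_C int_D CD by (simp add: Int_commute)
  also have "\<dots> \<le> integral S f"
    using D CS S
    by (intro integral_subset_le integrable_continuous_compact compact_Un compact_cbox)
       (auto intro: continuous_on_subset)
  finally show ?thesis .
qed

lemma integral_le_integral_subset_imp_eq:
  fixes f :: "'a::euclidean_space \<Rightarrow> real"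
  assumes S: "compact S" "convex S" "interior S \<noteq> {}"
    and f: "continuous_on S f" "\<And>x. x \<in> S \<Longrightarrow> 0 < f x"
    and D: "compact D" "D \<subseteq> S"
    and le: "integral S f \<le> integral D f"
  shows "D = S"
proof (rule ccontr)
  assume "D \<noteq> S"
  then obtain x where x: "x \<in> S - D"
    using D(2) by blast
  have "x \<in> closure (interior S)"
    using x closure_subset convex_closure_interior[OF S(2,3)] by blast
  moreover have "open (- D)"
    using D(1) compact_imp_closed by blast
  ultimately have "- D \<inter> interior S \<noteq> {}"
    using x open_Int_closure_eq_empty by blast
  then obtain y where "y \<in> interior S - D"
    by blast
  then have "integral D f < integral S f"
    using S(1) f D compact_imp_closed
    by (intro integral_less_integral_superset[where U = "interior S - D"])
       (auto dest: interior_subset[THEN subsetD] intro: less_imp_le)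
  with le show False
    by simp
qed

lemma integral_pos_convex_body:
  fixes f :: "'a::euclidean_space \<Rightarrow> real"
  assumes "compact S" "convex S" "interior S \<noteq> {}"
    and "continuous_on S f" "\<And>x. x \<in> S \<Longrightarrow> 0 < f x"
  shows "0 < integral S f"
  using integral_le_integral_subset_imp_eq[OF assms, of "{}"] assms(3) by force

lemma weighted_iou_eq_1_iff:
  fixes f :: "'a::euclidean_space \<Rightarrow> real"
  assumes P: "compact P" "convex P" "interior P \<noteq> {}"
    and G: "compact G" "convex G" "interior G \<noteq> {}"
    and f: "continuous_on G f" "\<And>x. x \<in> G \<Longrightarrow> 0 < f x"
  shows "integral (P \<inter> G) f / (integral G f + integral P (\<lambda>_. 1) - integral (P \<inter> G) (\<lambda>_. 1)) = 1
    \<longleftrightarrow> P = G"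
proof
  have PG: "compact (P \<inter> G)"
    using P(1) G(1) by (rule compact_Int)
  have weight_le: "integral (P \<inter> G) f \<le> integral G f"
    using PG G(1) f continuous_on_subset[OF f(1)]
    by (intro integral_subset_le integrable_continuous_compact) (auto intro: less_imp_le)
  have area_le: "integral (P \<inter> G) (\<lambda>_. 1::real) \<le> integral P (\<lambda>_. 1)"
    using PG P(1) by (intro integral_subset_le integrable_continuous_compact) auto
  have "0 < integral G f"
    using G f by (rule integral_pos_convex_body)
  moreover assume "integral (P \<inter> G) f
      / (integral G f + integral P (\<lambda>_. 1) - integral (P \<inter> G) (\<lambda>_. 1)) = 1"
  ultimately have "integral (P \<inter> G) f = integral G f + integral P (\<lambda>_. 1) - integral (P \<inter> G) (\<lambda>_. 1)"
    using area_le by (simp add: divide_eq_1_iff)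
  then have weight_ge: "integral G f \<le> integral (P \<inter> G) f"
    and area_ge: "integral P (\<lambda>_. 1::real) \<le> integral (P \<inter> G) (\<lambda>_. 1)"
    using weight_le area_le by linarith+
  have "P \<inter> G = G"
    using G f PG weight_ge by (intro integral_le_integral_subset_imp_eq) auto
  moreover have "P \<inter> G = P"
    using P PG area_ge by (intro integral_le_integral_subset_imp_eq[where f = "\<lambda>_. 1"]) auto
  ultimately show "P = G"
    by blast
next
  assume "P = G"
  then show "integral (P \<inter> G) f / (integral G f + integral P (\<lambda>_. 1) - integral (P \<inter> G) (\<lambda>_. 1)) = 1"
    using integral_pos_convex_body[OF G f] by simp
qed

definition rotation2 :: "real \<Rightarrow> real \<times> real \<Rightarrow> real \<times> real" where
  "rotation2 th p = (cos th * fst p - sin th * snd p, sin th * fst p + cos th * snd p)"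

lemma linear_rotation2: "linear (rotation2 th)"
  by (auto simp: linear_iff rotation2_def algebra_simps)

lemma rotation2_add: "rotation2 a (rotation2 b p) = rotation2 (a + b) p"
  by (simp add: rotation2_def cos_add sin_add algebra_simps)

lemma rotation2_inverse: "rotation2 (- th) (rotation2 th p) = p"
proof -
  have "rotation2 0 p = p"
    by (simp add: rotation2_def)
  then show ?thesis
    by (simp add: rotation2_add)
qed

lemma inj_rotation2: "inj (rotation2 th)"
  by (metis injI rotation2_inverse)

lemma obox_eq_image: "obox c w l th = (+) c ` rotation2 th ` cbox (- w / 2, - l / 2) (w / 2, l / 2)"
proof -
  have "obox c w l th = (\<lambda>(s, t). c + rotation2 th (s, t)) ` {(s, t). \<bar>s\<bar> \<le> w / 2 \<and> \<bar>t\<bar> \<le> l / 2}"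
    unfolding obox_def rotation2_def image_def by (cases c) (auto simp: algebra_simps)
  also have "{(s, t). \<bar>s\<bar> \<le> w / 2 \<and> \<bar>t\<bar> \<le> l / 2} = cbox (- w / 2, - l / 2) (w / 2, l / 2)"
    by (auto simp: cbox_Pair_eq abs_le_iff)
  finally show ?thesis
    by (simp add: image_image case_prod_beta')
qed

lemma compact_obox: "compact (obox c w l th)"
  unfolding obox_eq_image
  by (intro compact_translation compact_continuous_image linear_continuous_on
      linear_rotation2[THEN linear_conv_bounded_linear[THEN iffD1]] compact_cbox)

lemma convex_obox: "convex (obox c w l th)"
  unfolding obox_eq_image
  by (intro convex_translation convex_linear_image linear_rotation2 convex_box)

lemma center_in_obox: "0 \<le> w \<Longrightarrow> 0 \<le> l \<Longrightarrow> c \<in> obox c w l th"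
  unfolding obox_eq_image image_image
  by (rule image_eqI[of _ _ 0]) (auto simp: rotation2_def cbox_Pair_eq zero_prod_def)

lemma interior_obox_nonempty: "0 < w \<Longrightarrow> 0 < l \<Longrightarrow> interior (obox c w l th) \<noteq> {}"
  unfolding obox_eq_image interior_translation
    interior_injective_linear_image[OF linear_rotation2 inj_rotation2]
  by (simp add: interior_cbox box_ne_empty Basis_prod_def)

lemma rho_eq_norm: "rho p = norm p"
  by (cases p) (simp add: rho_def norm_Pair)

lemma continuous_on_ec_weight: "0 \<notin> S \<Longrightarrow> c \<noteq> 0 \<Longrightarrow> continuous_on S (ec_weight \<alpha> c)"
  unfolding ec_weight_def rho_eq_norm by (intro continuous_intros) auto

lemma ec_weight_pos: "c \<noteq> 0 \<Longrightarrow> p \<noteq> 0 \<Longrightarrow> 0 < ec_weight \<alpha> c p"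
  unfolding ec_weight_def rho_eq_norm by simp

theorem lemma3:
  fixes \<alpha> wG lG thG wP lP thP :: real and cG cP :: "real \<times> real"
  assumes "\<alpha> \<ge> 0"
    and "wG > 0" and "lG > 0" and "(0, 0) \<notin> obox cG wG lG thG"
    and "wP > 0" and "lP > 0"
  shows "ec_iou \<alpha> (obox cP wP lP thP) cG (obox cG wG lG thG) = 1
     \<longleftrightarrow> obox cP wP lP thP = obox cG wG lG thG"
proof -
  have origin: "0 \<notin> obox cG wG lG thG"
    using assms(4) by (simp add: zero_prod_def)
  moreover have "cG \<in> obox cG wG lG thG"
    using assms(2,3) by (simp add: center_in_obox)
  ultimately have "cG \<noteq> 0"
    by blast
  with origin have "continuous_on (obox cG wG lG thG) (ec_weight \<alpha> cG)"
    "\<And>p. p \<in> obox cG wG lG thG \<Longrightarrow> 0 < ec_weight \<alpha> cG p"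
    by (auto intro: continuous_on_ec_weight ec_weight_pos)
  then show ?thesis
    unfolding ec_iou_def weighted_area_def area_def
    using assms(2,3,5,6)
    by (intro weighted_iou_eq_1_iff compact_obox convex_obox interior_obox_nonempty) auto
qed

end
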